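(* Let $\psi$ be a bounded complexity measure, $k\in\omega\setminus\{0,1\}$, $A$ a nontrivial closed class of decision tables from $\mathcal M_k^\infty$, and suppose $\mathcal H^\infty_{\psi,A}$ is everywhere defined. Then $\mathcal H^\infty_{\psi,A}$ is nondecreasing and $\mathcal H^\infty_{\psi,A}(0)=0$. Moreover: (a) if the function $\psi^d$ is bounded from above on $A$, then there is a constant $c\ge 0$ with $\mathcal H^\infty_{\psi,A}(n)\le c$ for all $n\in\omega$; (b) if $\psi^d$ is not bounded from above on $A$, then there exists an infinite subset $D\subseteq\omega$ such that $\mathcal H^\infty_{\psi,A}(n)\ge H_D(n)$ for all $n\in\omega$.
   Context: Notation: $\omega=\{0,1,2,\dots\}$; $\mathcal P(\omega)$ is the set of nonempty finite subsets of $\omega$; for $k\in\omega\setminus\{0,1\}$, $E_k=\{0,1,\dots,k-1\}$. $P=\{f_i:i\in\omega\}$ is a set of attributes, $f_i\neq f_j$ for $i\ne j$. Decision tables: $\mathcal M_k^\infty$ is the set of rectangular tables filled with numbers from $E_k$, whose columns are labeled with pairwise different attributes from $P$, whose rows are pairwise different, and each row of which is labeled with a set from $\mathcal P(\omega)$ (its set of decisions). The empty table (no rows) is denoted $\Lambda$ and belongs to $\mathcal M_k^\infty$. For $T\in\mathcal M_k^\infty$: $\Delta(T)$ is the set of rows; $\Pi(T)$ is the intersection of the decision sets of all rows (common decisions); $\mathcal M_k^{\infty c}$ is the set of tables having at least one common decision, and $\Lambda\in\mathcal M_k^{\infty c}$; $\mathrm{At}(T)$ is the set of attributes labeling columns.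 For nonempty $T$, $\Omega_k(T)$ is the set of finite words (including the empty word $\lambda$) over the alphabet $\{(f_i,\delta):f_i\in\mathrm{At}(T),\delta\in E_k\}$; for $\alpha=(f_{i_1},\delta_1)\cdots(f_{i_m},\delta_m)$, $T\alpha$ is the subtable of $T$ consisting of the rows having value $\delta_j$ in the column $f_{i_j}$ for all $j$, and $T\lambda=T$. Operations: for $D\subseteq\mathrm{At}(T)$, $I(D,T)$ is obtained from $T$ by deleting the columns labeled with attributes from $D$ and, in each group of rows coinciding on the remaining columns, keeping only the first row; $I(\mathrm{At}(T),T)=\Lambda$. For $\nu:E_k^{|\mathrm{At}(T)|}\to\mathcal P(\omega)$, $J(\nu,T)$ is obtained by replacing the decision set of each row $\bar\delta$ by $\nu(\bar\delta)$. $[T]=\{J(\nu,I(D,T)):D\subseteq\mathrm{At}(T),\ \nu:E_k^{|\mathrm{At}(T)\setminus D|}\to\mathcal P(\omega)\}$; for nonempty $A\subseteq\mathcal M_k^\infty$, $[A]=\bigcup_{T\in A}[T]$. $A$ is a closed class if $[A]=A$; it is nontrivial if it contains a nonempty table. Decision trees: a $k$-decision tree is a finite directed rooted tree with at least two nodes in which the root and the edges leaving the root are unlabeled, each terminal node is labeled with a decision from $\omega$, and each other node is labeled with an attribute from $P$, each edge leaving such a node being labeled with a number from $E_k$. $\mathrm{At}(\Gamma)$ is the set of attributes labeling nodes of $\Gamma$. For a complete path $\tau=v_1,d_1,\dots,v_m,d_m,v_{m+1}$ (from the root to a terminal node), $\pi(\tau)=\lambda$ if $m=1$, and otherwise $\pi(\tau)=(f_{i_2},\delta_2)\cdots(f_{i_m},\delta_m)$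 where $v_j$ is labeled $f_{i_j}$ and $d_j$ is labeled $\delta_j$; $T(\tau)=T\pi(\tau)$. For $T\ne\Lambda$, a nondeterministic decision tree for $T$ is a $k$-decision tree $\Gamma$ with $\mathrm{At}(\Gamma)\subseteq\mathrm{At}(T)$ such that every row of $T$ belongs to $T(\tau)$ for some complete path $\tau$, and for every complete path $\tau$ either $T(\tau)=\Lambda$ or the decision at the terminal node of $\tau$ belongs to $\Pi(T(\tau))$. A deterministic decision tree for $T$ is a nondeterministic decision tree for $T$ in which, additionally, exactly one edge leaves the root and the edges leaving any node that is neither the root nor terminal are labeled with pairwise different numbers. Complexity measures: a partially bounded complexity measure is a function $\psi:P^*\to\omega$ on finite words over $P$ such that for all words $\alpha_1,\alpha_2$: $\psi(\alpha_1)=0$ iff $\alpha_1=\lambda$; $\psi(\alpha_1)$ is invariant under permutation of letters; $\psi(\alpha_1)\le\psi(\alpha_1\alpha_2)$; $\psi(\alpha_1\alpha_2)\le\psi(\alpha_1)+\psi(\alpha_2)$. It is bounded if in addition $\psi(\alpha)\ge|\alpha|$ for all $\alpha$. $\psi$ is extended to words $(f_{i_1},\delta_1)\cdots(f_{i_m},\delta_m)$ by $\psi(f_{i_1}\cdots f_{i_m})$. For a $k$-decision tree $\Gamma$, $\psi(\Gamma)=\max_\tau\psi(\pi(\tau))$ over complete paths. For $T\ne\Lambda$, $\psi^d(T)$ (resp. $\psi^a(T)$) is the minimum of $\psi(\Gamma)$ over deterministic (resp. nondeterministic) decision trees $\Gamma$ for $T$; $\psi^d(\Lambda)=\psi^a(\Lambda)=0$.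 $\mathcal H^\infty_{\psi,A}(n)$ is undefined if the set $\{\psi^d(T):T\in A,\ \psi^a(T)\le n\}$ is infinite, and otherwise equals its maximum. For an infinite set $D=\{n_i:i\in\omega\}\subseteq\omega$ with $n_i<n_{i+1}$, $H_D:\omega\to\omega$ is defined by $H_D(n)=0$ if $n<n_0$ and $H_D(n)=n_i$ if $n_i\le n<n_{i+1}$. *)

theory Defs
  imports Main "HOL-Library.Multiset"
begin

(* Attributes f_i are identified with their indices i :: nat.
   Numbers in E_k are nats < k; decisions are nats. *)

record dtable =
  attrs :: "nat list"
  rows  :: "(nat list \<times> nat set) list"  (* rows (values, decision set), in order *)

definition empty_table :: dtable ("\<Lambda>") where
  "\<Lambda> = \<lparr>attrs = [], rows = []\<rparr>"

definition valid_table :: "nat \<Rightarrow> dtable \<Rightarrow> bool" where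
  "valid_table k T \<longleftrightarrow>
     distinct (attrs T) \<and> distinct (map fst (rows T)) \<and>
     (\<forall>r\<in>set (rows T). length (fst r) = length (attrs T) \<and> (\<forall>x\<in>set (fst r). x < k)
                         \<and> snd r \<noteq> {} \<and> finite (snd r)) \<and>
     (rows T = [] \<longleftrightarrow> attrs T = [])"

definition colval :: "dtable \<Rightarrow> nat list \<Rightarrow> nat \<Rightarrow> nat" where
  "colval T v a = v ! (LEAST i. i < length (attrs T) \<and> attrs T ! i = a)"

definition sub_rows :: "dtable \<Rightarrow> (nat \<times> nat) list \<Rightarrow> (nat list \<times> nat set) list" where
  "sub_rows T w = filter (\<lambda>r. \<forall>p\<in>set w. colval T (fst r) (fst p) = snd p) (rows T)"

definition common :: "(nat list \<times> nat set) list \<Rightarrow> nat set" where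
  "common rs = \<Inter> (snd ` set rs)"

definition dedup :: "(nat list \<times> nat set) list \<Rightarrow> (nat list \<times> nat set) list" where
  "dedup rs = [rs ! i. i \<leftarrow> [0..<length rs], \<forall>j<i. fst (rs ! j) \<noteq> fst (rs ! i)]"

definition del_cols :: "nat set \<Rightarrow> dtable \<Rightarrow> dtable" where
  "del_cols D T =
     (if set (attrs T) \<subseteq> D then \<Lambda>
      else \<lparr>attrs = filter (\<lambda>a. a \<notin> D) (attrs T),
            rows = dedup (map (\<lambda>r. ([fst r ! i. i \<leftarrow> [0..<length (attrs T)], attrs T ! i \<notin> D], snd r))
                              (rows T))\<rparr>)"

definition relabel :: "(nat list \<Rightarrow> nat set) \<Rightarrow> dtable \<Rightarrow> dtable" where
  "relabel \<nu> T = T\<lparr>rows := map (\<lambda>r. (fst r, \<nu> (fst r))) (rows T)\<rparr>"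

definition valid_nu :: "nat \<Rightarrow> nat \<Rightarrow> (nat list \<Rightarrow> nat set) \<Rightarrow> bool" where
  "valid_nu k m \<nu> \<longleftrightarrow> (\<forall>v. length v = m \<and> (\<forall>x\<in>set v. x < k) \<longrightarrow> \<nu> v \<noteq> {} \<and> finite (\<nu> v))"

definition table_closure :: "nat \<Rightarrow> dtable \<Rightarrow> dtable set" where
  "table_closure k T = {relabel \<nu> (del_cols D T) | D \<nu>.
       D \<subseteq> set (attrs T) \<and> valid_nu k (card (set (attrs T) - D)) \<nu>}"

definition closed_class :: "nat \<Rightarrow> dtable set \<Rightarrow> bool" where
  "closed_class k A \<longleftrightarrow> A \<noteq> {} \<and> A \<subseteq> {T. valid_table k T} \<and> (\<Union>T\<in>A. table_closure k T) = A"

definition nontrivial :: "dtable set \<Rightarrow> bool" where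
  "nontrivial A \<longleftrightarrow> (\<exists>T\<in>A. rows T \<noteq> [])"

(* A non-root node is a Leaf (terminal, labelled with a decision)
   or a Node labelled with an attribute whose outgoing edges are (label, subtree).
   A k-decision tree is given by the (nonempty) list of subtrees below the unlabelled root. *)
datatype dtree = Leaf nat | Node nat "(nat \<times> dtree) list"

inductive wf_node :: "nat \<Rightarrow> bool \<Rightarrow> nat set \<Rightarrow> dtree \<Rightarrow> bool" for k det S where
  "wf_node k det S (Leaf d)"
| "a \<in> S \<Longrightarrow> cs \<noteq> [] \<Longrightarrow> (\<And>\<delta> t. (\<delta>, t) \<in> set cs \<Longrightarrow> \<delta> < k) \<Longrightarrow>
   (\<And>\<delta> t. (\<delta>, t) \<in> set cs \<Longrightarrow> wf_node k det S t) \<Longrightarrow>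
   (det \<longrightarrow> distinct (map fst cs)) \<Longrightarrow> wf_node k det S (Node a cs)"

type_synonym ktree = "dtree list"

definition ktree_wf :: "nat \<Rightarrow> bool \<Rightarrow> nat set \<Rightarrow> ktree \<Rightarrow> bool" where
  "ktree_wf k det S ts \<longleftrightarrow> ts \<noteq> [] \<and> (\<forall>t\<in>set ts. wf_node k det S t) \<and> (det \<longrightarrow> length ts = 1)"

inductive node_path :: "dtree \<Rightarrow> (nat \<times> nat) list \<Rightarrow> nat \<Rightarrow> bool" where
  "node_path (Leaf d) [] d"
| "(\<delta>, t) \<in> set cs \<Longrightarrow> node_path t w d \<Longrightarrow> node_path (Node a cs) ((a, \<delta>) # w) d"

(* complete paths tau, represented by (pi(tau), decision at terminal node) *)
definition complete_paths :: "ktree \<Rightarrow> ((nat \<times> nat) list \<times> nat) set" where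
  "complete_paths ts = {(w, d). \<exists>t\<in>set ts. node_path t w d}"

(* det = False: nondeterministic decision tree for T; det = True: deterministic *)
definition is_tree_for :: "nat \<Rightarrow> bool \<Rightarrow> dtable \<Rightarrow> ktree \<Rightarrow> bool" where
  "is_tree_for k det T ts \<longleftrightarrow>
     ktree_wf k det (set (attrs T)) ts \<and>
     (\<forall>r\<in>set (rows T). \<exists>p\<in>complete_paths ts. r \<in> set (sub_rows T (fst p))) \<and>
     (\<forall>p\<in>complete_paths ts. sub_rows T (fst p) = [] \<or> snd p \<in> common (sub_rows T (fst p)))"

definition partially_bounded_measure :: "(nat list \<Rightarrow> nat) \<Rightarrow> bool" where
  "partially_bounded_measure \<psi> \<longleftrightarrow>
     (\<forall>a. \<psi> a = 0 \<longleftrightarrow> a = []) \<and>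
     (\<forall>a b. mset a = mset b \<longrightarrow> \<psi> a = \<psi> b) \<and>
     (\<forall>a b. \<psi> a \<le> \<psi> (a @ b)) \<and>
     (\<forall>a b. \<psi> (a @ b) \<le> \<psi> a + \<psi> b)"

definition bounded_measure :: "(nat list \<Rightarrow> nat) \<Rightarrow> bool" where
  "bounded_measure \<psi> \<longleftrightarrow> partially_bounded_measure \<psi> \<and> (\<forall>a. length a \<le> \<psi> a)"

definition tree_cost :: "(nat list \<Rightarrow> nat) \<Rightarrow> ktree \<Rightarrow> nat" where
  "tree_cost \<psi> ts = Max ((\<lambda>p. \<psi> (map fst (fst p))) ` complete_paths ts)"

definition psi_d :: "(nat list \<Rightarrow> nat) \<Rightarrow> nat \<Rightarrow> dtable \<Rightarrow> nat" where
  "psi_d \<psi> k T = (if rows T = [] then 0 else Inf {tree_cost \<psi> ts | ts. is_tree_for k True T ts})"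

definition psi_a :: "(nat list \<Rightarrow> nat) \<Rightarrow> nat \<Rightarrow> dtable \<Rightarrow> nat" where
  "psi_a \<psi> k T = (if rows T = [] then 0 else Inf {tree_cost \<psi> ts | ts. is_tree_for k False T ts})"

(* H^infty_{psi,A}; None = undefined *)
definition Hset :: "(nat list \<Rightarrow> nat) \<Rightarrow> nat \<Rightarrow> dtable set \<Rightarrow> nat \<Rightarrow> nat set" where
  "Hset \<psi> k A n = {psi_d \<psi> k T | T. T \<in> A \<and> psi_a \<psi> k T \<le> n}"

definition H :: "(nat list \<Rightarrow> nat) \<Rightarrow> nat \<Rightarrow> dtable set \<Rightarrow> nat \<Rightarrow> nat option" where
  "H \<psi> k A n = (if finite (Hset \<psi> k A n) then Some (Max (Hset \<psi> k A n)) else None)"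

definition HD :: "nat set \<Rightarrow> nat \<Rightarrow> nat" where
  "HD D n = (if \<exists>d\<in>D. d \<le> n then Max {d\<in>D. d \<le> n} else 0)"

end

theory Submission
  imports Defs
begin

text \<open>The empty table belongs to every closed class and contributes the value 0 to every set
  \<open>Hset \<psi> k A n\<close>; these sets grow with \<open>n\<close>, which gives monotonicity and, since
  \<open>\<psi>\<^sup>a(T) = 0\<close> forces a single-leaf tree, the value at 0.
  If \<open>\<psi>\<^sup>d\<close> is unbounded on \<open>A\<close>, take \<open>D = {n. n \<le> \<H>(n)}\<close>: every table with a
  deterministic tree has \<open>\<psi>\<^sup>a(T) \<le> \<psi>\<^sup>d(T) \<le> \<H>(\<psi>\<^sup>a(T))\<close>, so \<open>\<psi>\<^sup>a(T) \<in> D\<close>; a bound on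
  \<open>D\<close> would therefore bound \<open>\<psi>\<^sup>d\<close>. Monotonicity of \<open>\<H>\<close> then gives \<open>H\<^sub>D \<le> \<H>\<close>.\<close>

lemma node_path_Leaf_iff: "node_path (Leaf x) w d \<longleftrightarrow> w = [] \<and> d = x"
  by (auto elim: node_path.cases intro: node_path.intros)

lemma finite_node_paths: "finite {(w, d). node_path t w d}"
proof (induction t)
  case (Leaf x)
  then show ?case by (simp add: node_path_Leaf_iff)
next
  case (Node a cs)
  let ?ext = "\<lambda>p. (\<lambda>(w, d). ((a, fst p) # w, d)) ` {(w, d). node_path (snd p) w d}"
  have "{(w, d). node_path (Node a cs) w d} \<subseteq> (\<Union>p\<in>set cs. ?ext p)"
  proof clarify
    fix w d assume "node_path (Node a cs) w d"
    then obtain \<delta> t w' where "w = (a, \<delta>) # w'" "(\<delta>, t) \<in> set cs" "node_path t w' d"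
      by (cases rule: node_path.cases) auto
    then show "(w, d) \<in> (\<Union>p\<in>set cs. ?ext p)" by force
  qed
  moreover have "finite (\<Union>p\<in>set cs. ?ext p)"
    using Node.IH by (force intro: finite_UN_I)
  ultimately show ?case by (rule finite_subset)
qed

lemma finite_complete_paths: "finite (complete_paths ts)"
proof -
  have "complete_paths ts = (\<Union>t\<in>set ts. {(w, d). node_path t w d})"
    unfolding complete_paths_def by auto
  then show ?thesis by (simp add: finite_node_paths)
qed

lemma psi_le_tree_cost:
  "p \<in> complete_paths ts \<Longrightarrow> \<psi> (map fst (fst p)) \<le> tree_cost \<psi> ts"
  unfolding tree_cost_def by (intro Max_ge) (simp_all add: finite_complete_paths)

lemma wf_node_nondet: "wf_node k True S t \<Longrightarrow> wf_node k False S t"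
  by (induction rule: wf_node.induct) (auto intro: wf_node.intros)

lemma is_tree_for_nondet: "is_tree_for k True T ts \<Longrightarrow> is_tree_for k False T ts"
  unfolding is_tree_for_def ktree_wf_def using wf_node_nondet by blast

lemma psi_a_le_psi_d:
  assumes "is_tree_for k True T ts"
  shows "psi_a \<psi> k T \<le> psi_d \<psi> k T"
proof -
  let ?Sd = "{tree_cost \<psi> ts | ts. is_tree_for k True T ts}"
  let ?Sa = "{tree_cost \<psi> ts | ts. is_tree_for k False T ts}"
  have "Inf ?Sd \<in> ?Sa"
    using Inf_nat_def1[of ?Sd] assms is_tree_for_nondet by blast
  then have "Inf ?Sa \<le> Inf ?Sd" by (rule cInf_lower) simp
  then show ?thesis unfolding psi_a_def psi_d_def by simp
qed

lemma sub_rows_Nil: "sub_rows T [] = rows T"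
  unfolding sub_rows_def by simp

lemma is_tree_for_Leaf:
  assumes "d \<in> common (rows T)"
  shows "is_tree_for k True T [Leaf d]"
proof -
  have "complete_paths [Leaf d] = {([], d)}"
    unfolding complete_paths_def by (simp add: node_path_Leaf_iff)
  then show ?thesis
    using assms unfolding is_tree_for_def ktree_wf_def by (simp add: sub_rows_Nil wf_node.intros(1))
qed

lemma tree_cost_Leaf: "tree_cost \<psi> [Leaf d] = \<psi> []"
  unfolding tree_cost_def complete_paths_def by (simp add: node_path_Leaf_iff)

lemma partially_bounded_measure_eq_0_iff:
  "partially_bounded_measure \<psi> \<Longrightarrow> \<psi> a = 0 \<longleftrightarrow> a = []"
  unfolding partially_bounded_measure_def by (rule conjunct1[THEN spec])

text \<open>A tree of cost 0 has only empty paths, so its decisions are common to all rows.\<close>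
lemma common_decision_if_tree_cost_eq_0:
  assumes "partially_bounded_measure \<psi>" and "is_tree_for k det T ts" and "tree_cost \<psi> ts = 0"
    and "rows T \<noteq> []"
  obtains d where "d \<in> common (rows T)"
proof -
  obtain r where "r \<in> set (rows T)" using assms(4) last_in_set by blast
  then obtain p where p: "p \<in> complete_paths ts" "r \<in> set (sub_rows T (fst p))"
    using assms(2) unfolding is_tree_for_def by blast
  have "\<psi> (map fst (fst p)) = 0" using psi_le_tree_cost[OF p(1), of \<psi>] assms(3) by simp
  then have "fst p = []" using partially_bounded_measure_eq_0_iff[OF assms(1)] by simp
  then have "sub_rows T (fst p) = rows T" by (simp add: sub_rows_Nil)
  moreover have "sub_rows T (fst p) = [] \<or> snd p \<in> common (sub_rows T (fst p))"
    using assms(2) p(1) unfolding is_tree_for_def by blast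
  ultimately show ?thesis using that assms(4) by simp
qed

text \<open>If there is no nondeterministic tree, \<open>\<psi>\<^sup>a(T)\<close> and \<open>\<psi>\<^sup>d(T)\<close> are both the
  unspecified value \<open>Inf {}\<close>.\<close>
lemma psi_d_eq_0_if_psi_a_eq_0:
  assumes "partially_bounded_measure \<psi>" and "psi_a \<psi> k T = 0"
  shows "psi_d \<psi> k T = 0"
proof (cases "rows T = []")
  case True
  then show ?thesis unfolding psi_d_def by simp
next
  case False
  then have rows: "rows T \<noteq> []" .
  let ?Sa = "{tree_cost \<psi> ts | ts. is_tree_for k False T ts}"
  show ?thesis
  proof (cases "?Sa = {}")
    case True
    then have "{tree_cost \<psi> ts | ts. is_tree_for k True T ts} = {}"
      using is_tree_for_nondet by blast
    then have "psi_d \<psi> k T = psi_a \<psi> k T" using True unfolding psi_a_def psi_d_def by simp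
    then show ?thesis using assms(2) by simp
  next
    case False
    then have "Inf ?Sa \<in> ?Sa" by (rule Inf_nat_def1)
    moreover have "Inf ?Sa = 0" using assms(2) rows unfolding psi_a_def by simp
    ultimately obtain ts where "is_tree_for k False T ts" "tree_cost \<psi> ts = 0" by auto
    then obtain d where "d \<in> common (rows T)"
      using common_decision_if_tree_cost_eq_0 assms(1) rows by blast
    then have "is_tree_for k True T [Leaf d]" and "tree_cost \<psi> [Leaf d] = 0"
      by (simp_all add: is_tree_for_Leaf tree_cost_Leaf partially_bounded_measure_eq_0_iff[OF assms(1)])
    then have "Inf {tree_cost \<psi> ts | ts. is_tree_for k True T ts} \<le> 0"
      by (intro cInf_lower) auto
    then show ?thesis using rows unfolding psi_d_def by simp
  qed
qed

lemma empty_table_in_closed_class: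
  assumes "closed_class k A"
  shows "\<Lambda> \<in> A"
proof -
  have "A \<noteq> {}" and closure_eq: "(\<Union>T\<in>A. table_closure k T) = A"
    using assms unfolding closed_class_def by blast+
  from \<open>A \<noteq> {}\<close> obtain T where T: "T \<in> A" by blast
  have "valid_nu k (card (set (attrs T) - set (attrs T))) (\<lambda>_. {0})"
    unfolding valid_nu_def by simp
  then have "relabel (\<lambda>_. {0}) (del_cols (set (attrs T)) T) \<in> table_closure k T"
    unfolding table_closure_def by blast
  moreover have "relabel (\<lambda>_. {0}) (del_cols (set (attrs T)) T) = \<Lambda>"
    unfolding relabel_def del_cols_def empty_table_def by simp
  ultimately have "\<Lambda> \<in> table_closure k T" by simp
  then have "\<Lambda> \<in> (\<Union>T\<in>A. table_closure k T)" by (rule UN_I[OF T])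
  then show ?thesis unfolding closure_eq .
qed

lemma zero_in_Hset:
  assumes "\<Lambda> \<in> A"
  shows "0 \<in> Hset \<psi> k A n"
proof -
  have "psi_a \<psi> k \<Lambda> = 0" and "psi_d \<psi> k \<Lambda> = 0"
    unfolding psi_a_def psi_d_def empty_table_def by simp_all
  then show ?thesis using assms unfolding Hset_def by force
qed

lemma Hset_mono: "m \<le> n \<Longrightarrow> Hset \<psi> k A m \<subseteq> Hset \<psi> k A n"
  unfolding Hset_def by auto

lemma the_H_eq_Max:
  "H \<psi> k A n \<noteq> None \<Longrightarrow> finite (Hset \<psi> k A n) \<and> the (H \<psi> k A n) = Max (Hset \<psi> k A n)"
  unfolding H_def by (simp split: if_splits)

lemma psi_d_le_the_H:
  assumes "H \<psi> k A n \<noteq> None" and "T \<in> A" and "psi_a \<psi> k T \<le> n"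
  shows "psi_d \<psi> k T \<le> the (H \<psi> k A n)"
  using the_H_eq_Max[OF assms(1)] assms(2,3) by (auto simp: Hset_def intro: Max_ge)

lemma the_H_mono:
  assumes "\<Lambda> \<in> A" and "H \<psi> k A n \<noteq> None" and "m \<le> n"
  shows "the (H \<psi> k A m) \<le> the (H \<psi> k A n)"
proof -
  have fin_n: "finite (Hset \<psi> k A n)" and "the (H \<psi> k A n) = Max (Hset \<psi> k A n)"
    using the_H_eq_Max[OF assms(2)] by auto
  moreover have "the (H \<psi> k A m) = Max (Hset \<psi> k A m)"
    using finite_subset[OF Hset_mono[OF assms(3)] fin_n] unfolding H_def by simp
  moreover have "Max (Hset \<psi> k A m) \<le> Max (Hset \<psi> k A n)"
    by (rule Max_mono[OF Hset_mono[OF assms(3)]]) (use zero_in_Hset[OF assms(1)] fin_n in auto)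
  ultimately show ?thesis by simp
qed

lemma H_0:
  assumes "partially_bounded_measure \<psi>" and "\<Lambda> \<in> A"
  shows "H \<psi> k A 0 = Some 0"
proof -
  have "Hset \<psi> k A 0 = {0}"
    using zero_in_Hset[OF assms(2)] psi_d_eq_0_if_psi_a_eq_0[OF assms(1)]
    unfolding Hset_def by fastforce
  then show ?thesis unfolding H_def by simp
qed

lemma the_H_le_if_psi_d_le:
  assumes "H \<psi> k A n \<noteq> None" and "\<Lambda> \<in> A" and "\<forall>T\<in>A. psi_d \<psi> k T \<le> c"
  shows "the (H \<psi> k A n) \<le> c"
proof -
  have fin: "finite (Hset \<psi> k A n)" and eq: "the (H \<psi> k A n) = Max (Hset \<psi> k A n)"
    using the_H_eq_Max[OF assms(1)] by auto
  have "Hset \<psi> k A n \<noteq> {}" using zero_in_Hset[OF assms(2)] by blast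
  moreover have "\<forall>x\<in>Hset \<psi> k A n. x \<le> c" using assms(3) unfolding Hset_def by blast
  ultimately show ?thesis by (simp add: eq Max_le_iff[OF fin])
qed

text \<open>Tables without a deterministic tree have \<open>\<psi>\<^sup>d(T) = Inf {}\<close>, an unspecified
  constant; it is absorbed into the bound.\<close>
lemma infinite_self_bounded_args_of_H:
  assumes "\<forall>n. H \<psi> k A n \<noteq> None" and "\<not> (\<exists>c. \<forall>T\<in>A. psi_d \<psi> k T \<le> c)"
  shows "infinite {n. n \<le> the (H \<psi> k A n)}"
proof
  assume "finite {n. n \<le> the (H \<psi> k A n)}"
  then obtain N where N: "\<And>n. n \<le> the (H \<psi> k A n) \<Longrightarrow> n \<le> N"
    unfolding finite_nat_set_iff_bounded_le by blast
  have "psi_d \<psi> k T \<le> max (Inf {}) (the (H \<psi> k A N))" if T: "T \<in> A" for T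
  proof (cases "rows T \<noteq> [] \<and> (\<exists>ts. is_tree_for k True T ts)")
    case True
    then have "psi_a \<psi> k T \<le> the (H \<psi> k A (psi_a \<psi> k T))"
      using psi_a_le_psi_d psi_d_le_the_H[OF spec[OF assms(1)] T order_refl] le_trans by blast
    then have "psi_d \<psi> k T \<le> the (H \<psi> k A N)"
      using N psi_d_le_the_H[OF spec[OF assms(1)] T] by blast
    then show ?thesis by simp
  qed (auto simp: psi_d_def)
  then show False using assms(2) by blast
qed

lemma HD_le:
  fixes f :: "nat \<Rightarrow> nat"
  assumes "mono f" and "D \<subseteq> {d. d \<le> f d}"
  shows "HD D n \<le> f n"
proof (cases "\<exists>d\<in>D. d \<le> n")
  case True
  let ?d = "Max {d\<in>D. d \<le> n}"
  have "?d \<in> {d\<in>D. d \<le> n}" by (rule Max_in) (use True in auto)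
  then have "?d \<le> f ?d" and "f ?d \<le> f n"
    using assms by (auto dest: monoD)
  then have "?d \<le> f n" by (rule le_trans)
  then show ?thesis using True unfolding HD_def by simp
qed (simp add: HD_def)

theorem theorem2:
  fixes \<psi> :: "nat list \<Rightarrow> nat" and k :: nat and A :: "dtable set"
  assumes "bounded_measure \<psi>" and "k \<ge> 2" and "closed_class k A" and "nontrivial A"
    and "\<forall>n. H \<psi> k A n \<noteq> None"
  shows "(\<forall>m n. m \<le> n \<longrightarrow> the (H \<psi> k A m) \<le> the (H \<psi> k A n)) \<and> H \<psi> k A 0 = Some 0 \<and>
         ((\<exists>c. \<forall>T\<in>A. psi_d \<psi> k T \<le> c) \<longrightarrow> (\<exists>c. \<forall>n. the (H \<psi> k A n) \<le> c)) \<and>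
         (\<not> (\<exists>c. \<forall>T\<in>A. psi_d \<psi> k T \<le> c) \<longrightarrow>
            (\<exists>D. infinite D \<and> (\<forall>n. HD D n \<le> the (H \<psi> k A n))))"
proof -
  have empty: "\<Lambda> \<in> A" using assms(3) by (rule empty_table_in_closed_class)
  have mono: "mono (\<lambda>n. the (H \<psi> k A n))"
    using the_H_mono[OF empty] assms(5) by (simp add: monoI)
  have HD_bound: "HD {n. n \<le> the (H \<psi> k A n)} n \<le> the (H \<psi> k A n)" for n
    by (rule HD_le[OF mono]) simp
  have "\<forall>m n. m \<le> n \<longrightarrow> the (H \<psi> k A m) \<le> the (H \<psi> k A n)"
    using mono unfolding mono_def by blast
  moreover have "H \<psi> k A 0 = Some 0"
    using assms(1) empty H_0 unfolding bounded_measure_def by blast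
  moreover have "(\<exists>c. \<forall>T\<in>A. psi_d \<psi> k T \<le> c) \<Longrightarrow> \<exists>c. \<forall>n. the (H \<psi> k A n) \<le> c"
    using the_H_le_if_psi_d_le[OF _ empty] assms(5) by blast
  moreover have "\<not> (\<exists>c. \<forall>T\<in>A. psi_d \<psi> k T \<le> c) \<Longrightarrow>
      \<exists>D. infinite D \<and> (\<forall>n. HD D n \<le> the (H \<psi> k A n))"
    using infinite_self_bounded_args_of_H[OF assms(5)] HD_bound by blast
  ultimately show ?thesis by blast
qed

end
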